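(* For every $k\in\{1,\dots,n-1\}$, every $v\in\wedge^k H_1$ and every generator $\sigma_t\in B_n$ ($1\le t\le n-1$), \[\psi_k(\sigma_t\cdot v)=q^{k-1}\,\sigma_t\cdot\psi_k(v),\] where on the left $\sigma_t$ acts diagonally on $\wedge^kH_1$, i.e. $\sigma_t\cdot(x_1\wedge\cdots\wedge x_k)=(\sigma_t\cdot x_1)\wedge\cdots\wedge(\sigma_t\cdot x_k)$, and on the right $\sigma_t$ acts on $H_k\subset V^{\otimes n}$ via $\Phi$.
   Context: Let $U=U_q(\mathfrak{gl}(1|1))$ be the unital superalgebra over $\mathbb{C}(q)$ generated by odd elements $E,F$ and even elements $\mathbf q^h$ ($h\in P^*=\mathbb{Z}h_1\oplus\mathbb{Z}h_2$) with relations $\mathbf q^0=1$, $\mathbf q^h\mathbf q^{h'}=\mathbf q^{h+h'}$, $\mathbf q^hE=q^{\langle h,\alpha\rangle}E\mathbf q^h$, $\mathbf q^hF=q^{-\langle h,\alpha\rangle}F\mathbf q^h$, $EF+FE=\frac{K-K^{-1}}{q-q^{-1}}$ with $K=\mathbf q^{h_1+h_2}$, $E^2=F^2=0$; here $P=\mathbb{Z}\epsilon_1\oplus\mathbb{Z}\epsilon_2$ with $\{\epsilon_1,\epsilon_2\}$ dual to $\{h_1,h_2\}$ and $\alpha=\epsilon_1-\epsilon_2$. Comultiplication: $\Delta(E)=E\otimes K^{-1}+1\otimes E$, $\Delta(F)=F\otimes1+K\otimes F$, $\Delta(\mathbf q^h)=\mathbf q^h\otimes\mathbf q^h$; on tensor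 products one uses the Koszul sign rule $(X\otimes Y)(a\otimes b)=(-1)^{|Y||a|}Xa\otimes Yb$. $V$ has basis $v_0$ (even), $v_1$ (odd) with $Ev_0=0,Ev_1=v_0,Fv_0=v_1,Fv_1=0$, $\mathbf q^hv_0=q^{\langle h,\epsilon_1\rangle}v_0$, $\mathbf q^hv_1=q^{\langle h,\epsilon_2\rangle}v_1$. Fix $n\ge2$; $U$ acts on $V^{\otimes n}$ via iterated comultiplication. For $0\le k\le n-1$, $H_k=\{v\in V^{\otimes n}: Ev=0,\ \mathbf q^hv=q^{\langle h,(n-k)\epsilon_1+k\epsilon_2\rangle}v\ \forall h\in P^*\}$. Braid action: $\check R:V\otimes V\to V\otimes V$ is given by $\check R(v_0\otimes v_0)=qv_0\otimes v_0$, $\check R(v_1\otimes v_0)=v_0\otimes v_1$, $\check R(v_0\otimes v_1)=v_1\otimes v_0+(q-q^{-1})v_0\otimes v_1$, $\check R(v_1\otimes v_1)=-q^{-1}v_1\otimes v_1$; $\Phi(\sigma_t)=\mathrm{id}^{\otimes(t-1)}\otimes\check R\otimes\mathrm{id}^{\otimes(n-t-1)}$ defines an action $\Phi$ of $B_n$ on $V^{\otimes n}$ commuting with $U$, hence preserving each $H_k$; write $\sigma\cdot v=\Phi(\sigma)v$. For $1\le i\le n-1$ let $e_i=v_0^{\otimes(i-1)}\otimes(q^{-1}v_0\otimes v_1-v_1\otimes v_0)\otimes v_0^{\otimes(n-1-i)}$; these form a basis of $H_1$. For $1\le i\le n$ let $w_i=v_0^{\otimes(i-1)}\otimes v_1\otimes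 v_0^{\otimes(n-i)}$ and $U'=\mathrm{span}\{w_i\}$; note $e_i=-w_i+q^{-1}w_{i+1}$, so $H_1\subset U'$. Let $\psi:\wedge^*U'\to V^{\otimes n}$ be the $\mathbb{C}(q)$-linear map with $\psi(w_{i_1}\wedge\cdots\wedge w_{i_k})=v_{\alpha_1}\otimes\cdots\otimes v_{\alpha_n}$ for $i_1<\cdots<i_k$, where $\alpha_j=1$ if $j\in\{i_1,\dots,i_k\}$ and $\alpha_j=0$ otherwise. $\psi_k$ is the restriction of $\psi$ to $\wedge^kH_1$; it is an isomorphism $\wedge^kH_1\to H_k$. *)

theory Defs
  imports "HOL-Computational_Algebra.Polynomial" "HOL-Computational_Algebra.Fraction_Field"
          "HOL-Combinatorics.Permutations"
begin

type_synonym ratfun = "complex poly fract"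

definition qq :: ratfun where
  "qq = Fract [:0, 1:] 1"

text \<open>The basis vector v_{\<alpha>1} \<otimes> ... \<otimes> v_{\<alpha>n} is indexed by the
  set S = {j. \<alpha>j = 1} \<subseteq> {1..n}; a vector is its coordinate function.\<close>
type_synonym vec = "nat set \<Rightarrow> ratfun"

definition tensor_space :: "nat \<Rightarrow> vec set" where
  "tensor_space n = {f. \<forall>S. f S \<noteq> 0 \<longrightarrow> S \<subseteq> {1..n}}"

definition tbasis :: "nat set \<Rightarrow> vec" where
  "tbasis S = (\<lambda>T. if T = S then 1 else 0)"

definition fin_lincombs :: "vec set \<Rightarrow> vec set" where
  "fin_lincombs A = {v. \<exists>(m::nat) c x. (\<forall>i<m. x i \<in> A) \<and> v = (\<lambda>T. \<Sum>i<m. c i * x i T)}"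

text \<open>Action of E via iterated coproduct: E acts at position j, K^{-1} (= q^{-1} on V) at
  positions > j, identity before; Koszul sign (-1)^{number of odd factors before j}.\<close>
definition E_coef :: "nat \<Rightarrow> nat set \<Rightarrow> nat set \<Rightarrow> ratfun" where
  "E_coef n S T = (\<Sum>j\<in>S. if T = S - {j}
      then (-1) ^ card {i\<in>S. i < j} * qq powi (- int (n - j)) else 0)"

definition E_act :: "nat \<Rightarrow> vec \<Rightarrow> vec" where
  "E_act n f = (\<lambda>T. \<Sum>S\<in>Pow {1..n}. f S * E_coef n S T)"

text \<open>Action of q^h for h = a h1 + b h2: v_S has weight (n - |S|) \<epsilon>1 + |S| \<epsilon>2.\<close>
definition qh_act :: "nat \<Rightarrow> int \<Rightarrow> int \<Rightarrow> vec \<Rightarrow> vec" where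
  "qh_act n a b f = (\<lambda>S. qq powi (a * int (n - card S) + b * int (card S)) * f S)"

definition Hspace :: "nat \<Rightarrow> nat \<Rightarrow> vec set" where
  "Hspace n k = {v \<in> tensor_space n. E_act n v = (\<lambda>_. 0) \<and>
      (\<forall>a b. qh_act n a b v = (\<lambda>S. qq powi (a * int (n - k) + b * int k) * v S))}"

text \<open>Phi(sigma_t) = id^{t-1} \<otimes> R \<otimes> id^{n-t-1} on basis vectors (R is even, so no signs).\<close>
definition Phi_basis :: "nat \<Rightarrow> nat set \<Rightarrow> vec" where
  "Phi_basis t S =
    (if t \<notin> S \<and> Suc t \<notin> S then (\<lambda>T. qq * tbasis S T)
     else if t \<in> S \<and> Suc t \<notin> S then tbasis (insert (Suc t) (S - {t}))
     else if t \<notin> S \<and> Suc t \<in> S then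
       (\<lambda>T. tbasis (insert t (S - {Suc t})) T + (qq - inverse qq) * tbasis S T)
     else (\<lambda>T. - inverse qq * tbasis S T))"

definition Phi :: "nat \<Rightarrow> nat \<Rightarrow> vec \<Rightarrow> vec" where
  "Phi n t f = (\<lambda>T. \<Sum>S\<in>Pow {1..n}. f S * Phi_basis t S T)"

text \<open>Exterior powers of U' = span{w_1..w_n}.  An element of U' \<subseteq> V^{\<otimes> n} has w_i-coordinate
  x {i}.  An element of \<wedge>^k U' is given by its coordinates with respect to the basis
  w_{i1} \<wedge> ... \<wedge> w_{ik} (i1 < ... < ik), indexed by the set {i1,...,ik}.\<close>
definition wedge :: "nat \<Rightarrow> vec list \<Rightarrow> vec" where
  "wedge n xs = (\<lambda>S. if S \<subseteq> {1..n} \<and> card S = length xs then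
      (\<Sum>p | p permutes {..<length xs}. of_int (sign p) *
         (\<Prod>j<length xs. (xs ! j) {sorted_list_of_set S ! p j}))
    else 0)"

definition wedge_H1 :: "nat \<Rightarrow> nat \<Rightarrow> vec set" where
  "wedge_H1 n k = fin_lincombs {wedge n xs | xs. length xs = k \<and> set xs \<subseteq> Hspace n 1}"

definition wedge_act :: "nat \<Rightarrow> nat \<Rightarrow> vec \<Rightarrow> vec" where
  "wedge_act n t f = (\<lambda>T. \<Sum>S\<in>Pow {1..n}.
      f S * wedge n (map (\<lambda>i. Phi n t (tbasis {i})) (sorted_list_of_set S)) T)"

text \<open>psi : \<wedge>^* U' \<rightarrow> V^{\<otimes> n}, w_{i1} \<wedge> ... \<wedge> w_{ik} \<mapsto> v_{\<alpha>} with \<alpha> the indicator of {i1..ik}.\<close>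
definition psi :: "nat \<Rightarrow> vec \<Rightarrow> vec" where
  "psi n f = (\<lambda>T. \<Sum>S\<in>Pow {1..n}. f S * tbasis S T)"

end

(*
  On U' = span{w_i} the generator sigma_t acts by w_t |-> w_{t+1},
  w_{t+1} |-> w_t + (q - q^-1) w_{t+1} and w_i |-> q w_i otherwise. Expanding
  sigma_t w_{i_1} /\ ... /\ sigma_t w_{i_k} multilinearly, each term is a wedge of
  basis vectors, i.e. +-v_alpha after sorting the indices, with all but at most two
  factors contributing a q. Comparing the four cases t, t+1 in or out of
  {i_1, ..., i_k} with R-check at positions t, t+1 gives the factor q^{k-1}; the one
  sign occurs when both indices are present, where w_{t+1} /\ w_t = - w_t /\ w_{t+1}
  yields the diagonal entry -q^-1 of R-check. Linearity extends this to
  wedge^k H_1, whose elements are supported on k-subsets.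
*)

theory Submission
  imports Defs
begin

lemma qq_nonzero: "qq \<noteq> 0"
  unfolding qq_def by (simp add: Zero_fract_def eq_fract)

lemma matching_permutation_distinct:
  assumes "distinct s" "length s = k" "length r = k" "p permutes {..<k}"
    and "\<forall>j<k. s ! p j = r ! j"
  shows "distinct r \<and> set r = set s"
proof -
  have "set r = (\<lambda>j. s ! p j) ` {..<k}"
    using assms(3,5) by (auto simp: set_conv_nth)
  also have "\<dots> = (!) s ` (p ` {..<k})" by (simp add: image_image)
  also have "p ` {..<k} = {..<k}" using assms(4) by (rule permutes_image)
  also have "(!) s ` {..<k} = set s" using assms(2) by (auto simp: set_conv_nth)
  finally have set_r: "set r = set s" .
  then have "card (set r) = length r" using assms(1-3) by (simp add: distinct_card)
  then show ?thesis using set_r by (simp add: card_distinct)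
qed

lemma matching_permutation_unique:
  assumes "distinct s" "length s = k" "p permutes {..<k}" "p' permutes {..<k}"
    and "\<forall>j<k. s ! p j = s ! p' j"
  shows "p = p'"
proof
  fix j show "p j = p' j"
  proof (cases "j < k")
    case True
    then have "p j < length s" "p' j < length s"
      using assms(2-4) by (auto dest: permutes_in_image)
    moreover have "s ! p j = s ! p' j" using assms(5) True by blast
    ultimately show ?thesis using nth_eq_iff_index_eq[OF assms(1)] by blast
  next
    case False
    then show ?thesis using assms(3,4) by (simp add: permutes_not_in)
  qed
qed

lemma prod_lessThan_if_mem:
  assumes "J \<subseteq> {..<k}"
  shows "(\<Prod>j<k. if j \<in> J then 1 else a) = a ^ (k - card J)"
proof -
  have "(\<Prod>j<k. if j \<in> J then 1 else a) = (\<Prod>j\<in>{..<k} - J. a)"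
    by (simp add: prod.If_cases Diff_eq)
  also have "\<dots> = a ^ (k - card J)"
    using assms by (simp add: card_Diff_subset finite_subset)
  finally show ?thesis .
qed

lemma prod_lessThan_if_all:
  fixes c :: "nat \<Rightarrow> 'a::comm_semiring_1"
  shows "(\<Prod>j<k. if P j then c j else 0) = (if \<forall>j<k. P j then \<Prod>j<k. c j else 0)"
proof (cases "\<forall>j<k. P j")
  case False
  then obtain j where "j < k" "\<not> P j" by blast
  then show ?thesis by (intro trans[OF prod_zero]) auto
qed (auto intro: prod.cong)

lemma wedge_scaled_basis:
  assumes "length xs = k"
    and slots: "\<And>j. j < k \<Longrightarrow> xs ! j = (\<lambda>X. c j * tbasis {r ! j} X)"
  shows "wedge n xs T = (if T \<subseteq> {1..n} \<and> card T = k then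
      (\<Sum>p | p permutes {..<k} \<and> (\<forall>j<k. sorted_list_of_set T ! p j = r ! j). of_int (sign p))
        * (\<Prod>j<k. c j) else 0)"
proof -
  let ?match = "\<lambda>p. \<forall>j<k. sorted_list_of_set T ! p j = r ! j"
  have factor: "(xs ! j) {Y} = (if Y = r ! j then c j else 0)" if "j < k" for j Y
    using that by (simp add: slots tbasis_def)
  have "(\<Prod>j<k. (xs ! j) {sorted_list_of_set T ! p j}) = (if ?match p then \<Prod>j<k. c j else 0)"
    for p by (subst prod.cong[OF refl factor]) (simp_all add: prod_lessThan_if_all)
  then have "(\<Sum>p | p permutes {..<k}.
        of_int (sign p) * (\<Prod>j<k. (xs ! j) {sorted_list_of_set T ! p j}))
      = (\<Sum>p | p permutes {..<k}. if ?match p then of_int (sign p) * (\<Prod>j<k. c j) else 0)"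
    by (intro sum.cong) auto
  also have "\<dots> = (\<Sum>p | p permutes {..<k} \<and> ?match p. of_int (sign p)) * (\<Prod>j<k. c j)"
    by (simp add: sum.inter_filter[symmetric] finite_permutations sum_distrib_right)
  finally show ?thesis by (simp add: wedge_def assms(1))
qed

lemma wedge_scaled_basis_sorting:
  assumes "length xs = k" "length r = k" "distinct r" "set r \<subseteq> {1..n}"
    and slots: "\<And>j. j < k \<Longrightarrow> xs ! j = (\<lambda>X. c j * tbasis {r ! j} X)"
    and p: "p permutes {..<k}" "\<forall>j<k. sorted_list_of_set (set r) ! p j = r ! j"
  shows "wedge n xs = (\<lambda>T. of_int (sign p) * (\<Prod>j<k. c j) * tbasis (set r) T)"
proof
  fix T
  let ?matching = "{p. p permutes {..<k} \<and> (\<forall>j<k. sorted_list_of_set T ! p j = r ! j)}"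
  have card_r: "card (set r) = k" using assms(2,3) by (simp add: distinct_card)
  show "wedge n xs T = of_int (sign p) * (\<Prod>j<k. c j) * tbasis (set r) T"
  proof (cases "T = set r")
    case True
    have "?matching = {p}"
      using matching_permutation_unique[of "sorted_list_of_set T" k] p card_r True by auto
    then show ?thesis
      using wedge_scaled_basis[OF assms(1) slots] True card_r assms(4) by (simp add: tbasis_def)
  next
    case False
    have "(\<Sum>p\<in>?matching. of_int (sign p) :: ratfun) = 0" if "T \<subseteq> {1..n}" "card T = k"
    proof -
      have "finite T" using that(1) finite_subset by blast
      then have "?matching = {}"
        using matching_permutation_distinct[of "sorted_list_of_set T" k r] that(2) assms(2) False
        by auto
      then show ?thesis by (simp only: sum.empty)
    qed
    then show ?thesis
      using wedge_scaled_basis[OF assms(1) slots, of n T] False by (auto simp: tbasis_def)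
  qed
qed

lemma wedge_scaled_basis_not_distinct:
  assumes "length xs = k" "length r = k" "\<not> distinct r"
    and slots: "\<And>j. j < k \<Longrightarrow> xs ! j = (\<lambda>X. c j * tbasis {r ! j} X)"
  shows "wedge n xs = (\<lambda>_. 0)"
proof
  fix T
  have "(\<Sum>p | p permutes {..<k} \<and> (\<forall>j<k. sorted_list_of_set T ! p j = r ! j). of_int (sign p)
      :: ratfun) = 0" if "T \<subseteq> {1..n}" "card T = k"
  proof -
    have "finite T" using that(1) finite_subset by blast
    then have "{p. p permutes {..<k} \<and> (\<forall>j<k. sorted_list_of_set T ! p j = r ! j)} = {}"
      using matching_permutation_distinct[of "sorted_list_of_set T" k r] that(2) assms(2,3)
      by auto
    then show ?thesis by (simp only: sum.empty)
  qed
  then show "wedge n xs T = 0" using wedge_scaled_basis[OF assms(1) slots, of n T] by auto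
qed

lemma wedge_scaled_basis_mono:
  assumes s: "sorted_wrt (<) s" and h: "strict_mono_on (set s) h" "h ` set s \<subseteq> {1..n}"
    and J: "J \<subseteq> {..<length s}" and "length xs = length s"
    and slots: "\<And>j. j < length s \<Longrightarrow>
      xs ! j = (\<lambda>X. (if j \<in> J then 1 else a) * tbasis {h (s ! j)} X)"
  shows "wedge n xs = (\<lambda>T. a ^ (length s - card J) * tbasis (h ` set s) T)"
proof -
  have sorted_hs: "sorted_wrt (<) (map h s)"
    using s h(1) by (auto simp: sorted_wrt_map strict_mono_on_def intro: sorted_wrt_mono_rel)
  then have "sorted_list_of_set (set (map h s)) = map h s"
    by (intro strict_sorted_equal) simp_all
  then have "wedge n xs = (\<lambda>T. of_int (sign (id :: nat \<Rightarrow> nat))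
      * (\<Prod>j<length s. if j \<in> J then 1 else a) * tbasis (set (map h s)) T)"
    using sorted_hs h(2)
    by (intro wedge_scaled_basis_sorting[OF assms(5), where r = "map h s"])
      (simp_all add: slots strict_sorted_iff permutes_id)
  then show ?thesis using J by (simp add: prod_lessThan_if_mem sign_id)
qed

lemma wedge_scaled_basis_one_moved:
  assumes s: "sorted_wrt (<) s" "set s \<subseteq> {1..n}" and "u \<in> {1..n}"
    and j0: "j0 < length s" and "length xs = length s"
    and mono: "strict_mono_on (set s) (\<lambda>i. if i = s ! j0 then u else i)"
    and moved: "xs ! j0 = tbasis {u}"
    and fixed: "\<And>j. j < length s \<Longrightarrow> j \<noteq> j0 \<Longrightarrow> xs ! j = (\<lambda>X. a * tbasis {s ! j} X)"
  shows "wedge n xs = (\<lambda>T. a ^ (length s - 1) * tbasis (insert u (set s - {s ! j0})) T)"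
proof -
  let ?h = "\<lambda>i. if i = s ! j0 then u else i"
  have distinct_s: "j < length s \<Longrightarrow> s ! j = s ! j0 \<longleftrightarrow> j = j0" for j
    using s(1) j0 by (simp add: strict_sorted_iff nth_eq_iff_index_eq)
  have "wedge n xs = (\<lambda>T. a ^ (length s - card {j0}) * tbasis (?h ` set s) T)"
  proof (rule wedge_scaled_basis_mono[OF s(1) mono])
    fix j assume "j < length s"
    then show "xs ! j = (\<lambda>X. (if j \<in> {j0} then 1 else a) * tbasis {?h (s ! j)} X)"
      using moved fixed distinct_s by auto
  qed (use assms in auto)
  moreover have "?h ` set s = insert u (set s - {s ! j0})" using j0 by auto
  ultimately show ?thesis by simp
qed

lemma wedge_slot_add:
  assumes "j < length xs" "xs ! j = (\<lambda>X. a X + c * b X)"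
  shows "wedge n xs T = wedge n (xs[j := a]) T + c * wedge n (xs[j := b]) T"
proof -
  let ?k = "length xs"
  have split: "(\<Prod>i<?k. (xs ! i) (Y i))
      = (\<Prod>i<?k. (xs[j := a] ! i) (Y i)) + c * (\<Prod>i<?k. (xs[j := b] ! i) (Y i))" for Y
  proof -
    have rest: "(\<Prod>i\<in>{..<?k} - {j}. (xs[j := z] ! i) (Y i)) = (\<Prod>i\<in>{..<?k} - {j}. (xs ! i) (Y i))"
      for z by (intro prod.cong) auto
    have "j \<in> {..<?k}" using assms(1) by simp
    note remove = prod.remove[OF finite_lessThan this]
    show ?thesis
      unfolding remove[of "\<lambda>i. (xs ! i) (Y i)"] remove[of "\<lambda>i. (xs[j := a] ! i) (Y i)"]
        remove[of "\<lambda>i. (xs[j := b] ! i) (Y i)"] rest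
      using assms by (simp add: algebra_simps)
  qed
  show ?thesis
    by (simp add: wedge_def split sum.distrib sum_distrib_left algebra_simps)
qed

lemma Phi_tbasis: "S \<subseteq> {1..n} \<Longrightarrow> Phi n t (tbasis S) = Phi_basis t S"
proof
  fix T assume S: "S \<subseteq> {1..n}"
  have "Phi n t (tbasis S) T = (\<Sum>S'\<in>Pow {1..n}. if S' = S then Phi_basis t S' T else 0)"
    unfolding Phi_def by (intro sum.cong) (auto simp: tbasis_def)
  also have "\<dots> = Phi_basis t S T" using S by (simp add: sum.delta')
  finally show "Phi n t (tbasis S) T = Phi_basis t S T" .
qed

lemma Phi_basis_singleton_t: "Phi_basis t {t} = tbasis {Suc t}"
  by (simp add: Phi_basis_def)

lemma Phi_basis_singleton_Suc:
  "Phi_basis t {Suc t} = (\<lambda>X. tbasis {t} X + (qq - inverse qq) * tbasis {Suc t} X)"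
  by (simp add: Phi_basis_def)

lemma Phi_basis_singleton_other:
  "i \<noteq> t \<Longrightarrow> i \<noteq> Suc t \<Longrightarrow> Phi_basis t {i} = (\<lambda>X. qq * tbasis {i} X)"
  by (simp add: Phi_basis_def)

(* S = {i_1 < ... < i_k} indexes w_{i_1} /\ ... /\ w_{i_k}, and
   map (\<lambda>i. Phi n t (tbasis {i})) (sorted_list_of_set S) is the list of the sigma_t w_{i_j}. *)
context
  fixes n t :: nat and S :: "nat set"
  assumes S_sub: "S \<subseteq> {1..n}" and S_ne: "S \<noteq> {}" and t_ge: "1 \<le> t" and t_less: "Suc t \<le> n"
begin

private lemma finite_S: "finite S"
  using S_sub finite_subset by blast

private lemma card_S_pos: "0 < card S"
  using finite_S S_ne by (simp add: card_gt_0_iff)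

private lemma sorted_S_nth_in: "j < card S \<Longrightarrow> sorted_list_of_set S ! j \<in> S"
  using finite_S by (metis length_sorted_list_of_set nth_mem set_sorted_list_of_set)

private lemma sorted_S_nth_eq_iff:
  "j < card S \<Longrightarrow> j' < card S \<Longrightarrow> sorted_list_of_set S ! j = sorted_list_of_set S ! j' \<longleftrightarrow> j = j'"
  by (simp add: nth_eq_iff_index_eq)

private lemma sorted_S_index:
  assumes "i \<in> S" obtains j where "j < card S" "sorted_list_of_set S ! j = i"
  using assms finite_S by (metis in_set_conv_nth length_sorted_list_of_set set_sorted_list_of_set)

lemma Phi_w: "i \<in> S \<Longrightarrow> Phi n t (tbasis {i}) = Phi_basis t {i}"
  using S_sub by (simp add: Phi_tbasis subset_iff)

lemma Phi_w_t: "t \<in> S \<Longrightarrow> Phi n t (tbasis {t}) = tbasis {Suc t}"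
  by (simp add: Phi_w Phi_basis_singleton_t)

lemma Phi_w_Suc_t:
  "Suc t \<in> S \<Longrightarrow> Phi n t (tbasis {Suc t}) = (\<lambda>X. tbasis {t} X + (qq - inverse qq) * tbasis {Suc t} X)"
  by (simp add: Phi_w Phi_basis_singleton_Suc)

lemma Phi_w_nth_fixed:
  assumes "j < card S" "sorted_list_of_set S ! j \<noteq> t" "sorted_list_of_set S ! j \<noteq> Suc t"
  shows "Phi n t (tbasis {sorted_list_of_set S ! j})
    = (\<lambda>X. qq * tbasis {sorted_list_of_set S ! j} X)"
  using assms finite_S sorted_S_nth_in[OF assms(1)] by (simp add: Phi_w Phi_basis_singleton_other)

lemma wedge_sigma_fixing:
  assumes "t \<notin> S" "Suc t \<notin> S"
  shows "wedge n (map (\<lambda>i. Phi n t (tbasis {i})) (sorted_list_of_set S))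
    = (\<lambda>T. qq ^ (card S - 1) * Phi_basis t S T)"
proof -
  let ?s = "sorted_list_of_set S"
  have "wedge n (map (\<lambda>i. Phi n t (tbasis {i})) ?s)
      = (\<lambda>T. qq ^ (length ?s - card ({} :: nat set)) * tbasis (id ` set ?s) T)"
  proof (rule wedge_scaled_basis_mono)
    fix j assume j: "j < length ?s"
    then have "?s ! j \<in> S" using finite_S sorted_S_nth_in by simp
    then have "?s ! j \<noteq> t" "?s ! j \<noteq> Suc t" using assms by auto
    then show "map (\<lambda>i. Phi n t (tbasis {i})) ?s ! j
        = (\<lambda>X. (if j \<in> {} then 1 else qq) * tbasis {id (?s ! j)} X)"
      using j finite_S by (simp add: Phi_w_nth_fixed)
  qed (use S_sub finite_S in \<open>auto simp: strict_mono_on_def\<close>)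
  moreover have "Phi_basis t S = (\<lambda>T. qq * tbasis S T)" using assms by (simp add: Phi_basis_def)
  moreover have "qq ^ (card S - 1) * qq = qq ^ card S" using card_S_pos by (rule power_minus_mult)
  ultimately show ?thesis using finite_S by (simp add: mult.assoc[symmetric])
qed

lemma wedge_sigma_moving_t:
  assumes "t \<in> S" "Suc t \<notin> S"
  shows "wedge n (map (\<lambda>i. Phi n t (tbasis {i})) (sorted_list_of_set S))
    = (\<lambda>T. qq ^ (card S - 1) * Phi_basis t S T)"
proof -
  let ?s = "sorted_list_of_set S"
  obtain j0 where j0: "j0 < card S" "?s ! j0 = t" using sorted_S_index assms(1) by blast
  have "wedge n (map (\<lambda>i. Phi n t (tbasis {i})) ?s)
      = (\<lambda>T. qq ^ (length ?s - 1) * tbasis (insert (Suc t) (set ?s - {?s ! j0})) T)"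
  proof (rule wedge_scaled_basis_one_moved)
    show "strict_mono_on (set ?s) (\<lambda>i. if i = ?s ! j0 then Suc t else i)"
      using finite_S assms j0 by (auto simp: strict_mono_on_def intro: Suc_lessI)
    fix j assume j: "j < length ?s" "j \<noteq> j0"
    then have "?s ! j \<in> S" "?s ! j \<noteq> t"
      using finite_S sorted_S_nth_in sorted_S_nth_eq_iff j0 by auto
    then have "?s ! j \<noteq> Suc t" using assms(2) by auto
    with j \<open>?s ! j \<noteq> t\<close> show "map (\<lambda>i. Phi n t (tbasis {i})) ?s ! j = (\<lambda>X. qq * tbasis {?s ! j} X)"
      using finite_S by (simp add: Phi_w_nth_fixed)
  qed (use j0 assms finite_S S_sub t_less Phi_w_t in auto)
  then show ?thesis using assms finite_S j0 by (simp add: Phi_basis_def)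
qed

lemma wedge_sigma_moving_Suc_t:
  assumes "t \<notin> S" "Suc t \<in> S"
  shows "wedge n (map (\<lambda>i. Phi n t (tbasis {i})) (sorted_list_of_set S))
    = (\<lambda>T. qq ^ (card S - 1) * Phi_basis t S T)"
proof
  fix T
  let ?s = "sorted_list_of_set S" and ?xs = "map (\<lambda>i. Phi n t (tbasis {i})) (sorted_list_of_set S)"
  obtain j1 where j1: "j1 < card S" "?s ! j1 = Suc t" using sorted_S_index assms(2) by blast
  have fixed: "?xs[j1 := x] ! j = (\<lambda>X. qq * tbasis {?s ! j} X)" if "j < length ?s" "j \<noteq> j1" for x j
  proof -
    have "?s ! j \<noteq> Suc t" using that j1 finite_S sorted_S_nth_eq_iff[of j j1] by simp
    moreover have "?s ! j \<noteq> t" using that finite_S sorted_S_nth_in assms(1) by force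
    ultimately show ?thesis using that finite_S by (simp add: Phi_w_nth_fixed)
  qed
  have "wedge n (?xs[j1 := tbasis {t}])
      = (\<lambda>T. qq ^ (length ?s - 1) * tbasis (insert t (set ?s - {?s ! j1})) T)"
  proof (rule wedge_scaled_basis_one_moved[OF _ _ _ _ _ _ _ fixed])
    show "strict_mono_on (set ?s) (\<lambda>i. if i = ?s ! j1 then t else i)"
      using finite_S assms j1 by (auto simp: strict_mono_on_def less_Suc_eq)
  qed (use j1 finite_S S_sub t_ge t_less in auto)
  moreover have "wedge n (?xs[j1 := tbasis {Suc t}])
      = (\<lambda>T. qq ^ (length ?s - 1) * tbasis (insert (Suc t) (set ?s - {?s ! j1})) T)"
    by (rule wedge_scaled_basis_one_moved[OF _ _ _ _ _ _ _ fixed])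
      (use j1 finite_S S_sub t_less in \<open>auto simp: strict_mono_on_def\<close>)
  moreover have "wedge n ?xs T = wedge n (?xs[j1 := tbasis {t}]) T
      + (qq - inverse qq) * wedge n (?xs[j1 := tbasis {Suc t}]) T"
    using j1 assms(2) finite_S by (intro wedge_slot_add) (simp_all add: Phi_w_Suc_t)
  moreover have "insert (Suc t) (S - {Suc t}) = S" using assms(2) by blast
  ultimately show "wedge n ?xs T = qq ^ (card S - 1) * Phi_basis t S T"
    using assms j1 finite_S by (simp add: Phi_basis_def algebra_simps)
qed

lemma nth_sigma_slots_exchanged:
  assumes "t \<in> S" and j0: "j0 < card S" "sorted_list_of_set S ! j0 = t"
    and j1: "j1 < card S" "sorted_list_of_set S ! j1 = Suc t" and j: "j < card S"
  shows "(map (\<lambda>i. Phi n t (tbasis {i})) (sorted_list_of_set S))[j1 := tbasis {u}] ! j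
    = (\<lambda>X. (if j \<in> {j0, j1} then 1 else qq)
        * tbasis {map (\<lambda>i. if i = t then Suc t else if i = Suc t then u else i)
                    (sorted_list_of_set S) ! j} X)"
proof (cases "j \<in> {j0, j1}")
  case True
  moreover have "j0 \<noteq> j1" using j0 j1 by auto
  ultimately show ?thesis using j0 j1 j finite_S Phi_w_t[OF assms(1)] by auto
next
  case False
  then have "sorted_list_of_set S ! j \<noteq> t" "sorted_list_of_set S ! j \<noteq> Suc t"
    using j j0 j1 sorted_S_nth_eq_iff[of j j0] sorted_S_nth_eq_iff[of j j1] by auto
  then show ?thesis using j False finite_S Phi_w_nth_fixed by simp
qed

lemma wedge_sigma_swapped:
  assumes "t \<in> S" "Suc t \<in> S" and j0: "j0 < card S" "sorted_list_of_set S ! j0 = t"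
    and j1: "j1 < card S" "sorted_list_of_set S ! j1 = Suc t"
  shows "wedge n ((map (\<lambda>i. Phi n t (tbasis {i})) (sorted_list_of_set S))[j1 := tbasis {t}])
    = (\<lambda>T. - (qq ^ (card S - 2) * tbasis S T))"
proof -
  let ?s = "sorted_list_of_set S"
  define h where "h = (\<lambda>i. if i = t then Suc t else if i = Suc t then t else i)"
  have j01: "j0 \<noteq> j1" using j0 j1 by auto
  have h_S: "h ` S = S" using assms(1,2) by (force simp: h_def)
  have h_nth: "?s ! Transposition.transpose j0 j1 j = map h ?s ! j" if j: "j < card S" for j
  proof -
    consider "j = j0" | "j = j1" | "j \<noteq> j0" "j \<noteq> j1" "?s ! j \<noteq> t" "?s ! j \<noteq> Suc t"
      using j j0 j1 sorted_S_nth_eq_iff[of j j0] sorted_S_nth_eq_iff[of j j1] by auto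
    then show ?thesis using j j0 j1 finite_S by cases (auto simp: h_def)
  qed
  have "wedge n ((map (\<lambda>i. Phi n t (tbasis {i})) ?s)[j1 := tbasis {t}])
      = (\<lambda>T. of_int (sign (Transposition.transpose j0 j1))
        * (\<Prod>j<card S. if j \<in> {j0, j1} then 1 else qq) * tbasis (set (map h ?s)) T)"
  proof (rule wedge_scaled_basis_sorting)
    show "distinct (map h ?s)" using finite_S by (simp add: distinct_map inj_on_def h_def)
    show "Transposition.transpose j0 j1 permutes {..<card S}"
      using j0 j1 by (simp add: permutes_swap_id)
  qed (use finite_S h_S S_sub h_nth nth_sigma_slots_exchanged[OF assms(1) j0 j1] in
    \<open>simp_all add: h_def\<close>)
  moreover have "(\<Prod>j<card S. if j \<in> {j0, j1} then 1 else qq) = qq ^ (card S - 2)"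
    using prod_lessThan_if_mem[of "{j0, j1}" "card S" qq] j0 j1 j01 by (simp add: numeral_2_eq_2)
  ultimately show ?thesis using j01 h_S finite_S by (simp add: sign_swap_id)
qed

lemma wedge_sigma_exchanging:
  assumes "t \<in> S" "Suc t \<in> S"
  shows "wedge n (map (\<lambda>i. Phi n t (tbasis {i})) (sorted_list_of_set S))
    = (\<lambda>T. qq ^ (card S - 1) * Phi_basis t S T)"
proof
  fix T
  let ?s = "sorted_list_of_set S" and ?xs = "map (\<lambda>i. Phi n t (tbasis {i})) (sorted_list_of_set S)"
  obtain j0 where j0: "j0 < card S" "?s ! j0 = t" using sorted_S_index assms(1) by blast
  obtain j1 where j1: "j1 < card S" "?s ! j1 = Suc t" using sorted_S_index assms(2) by blast
  let ?r = "map (\<lambda>i. if i = t then Suc t else if i = Suc t then Suc t else i) ?s"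
  have "?r ! j0 = ?r ! j1" "j0 \<noteq> j1" using j0 j1 finite_S by auto
  then have repeated: "\<not> distinct ?r" using j0 j1 finite_S by (simp add: distinct_conv_nth) blast
  have "wedge n (?xs[j1 := tbasis {Suc t}]) = (\<lambda>_. 0)"
    by (rule wedge_scaled_basis_not_distinct[OF _ _ repeated
          nth_sigma_slots_exchanged[OF assms(1) j0 j1]])
      (use finite_S in simp_all)
  moreover have "wedge n ?xs T = wedge n (?xs[j1 := tbasis {t}]) T
      + (qq - inverse qq) * wedge n (?xs[j1 := tbasis {Suc t}]) T"
    using j1 assms(2) finite_S by (intro wedge_slot_add) (simp_all add: Phi_w_Suc_t)
  moreover have "qq ^ (card S - 1) = qq * qq ^ (card S - 2)"
  proof -
    have "card {t, Suc t} \<le> card S" using assms by (intro card_mono[OF finite_S]) simp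
    then have "card S - 1 = Suc (card S - 2)" by simp
    then show ?thesis by simp
  qed
  ultimately show "wedge n ?xs T = qq ^ (card S - 1) * Phi_basis t S T"
    using wedge_sigma_swapped[OF assms j0 j1] assms qq_nonzero
    by (simp add: Phi_basis_def tbasis_def)
qed

lemma wedge_sigma_basis:
  "wedge n (map (\<lambda>i. Phi n t (tbasis {i})) (sorted_list_of_set S))
    = (\<lambda>T. qq ^ (card S - 1) * Phi_basis t S T)"
  using wedge_sigma_fixing wedge_sigma_moving_t wedge_sigma_moving_Suc_t wedge_sigma_exchanging
  by blast

end

lemma fin_lincombs_vanishing:
  assumes "v \<in> fin_lincombs A" and "\<And>x. x \<in> A \<Longrightarrow> x S = 0"
  shows "v S = 0"
  using assms unfolding fin_lincombs_def by (auto intro!: sum.neutral)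

lemma wedge_H1_support:
  assumes "v \<in> wedge_H1 n k" "v S \<noteq> 0"
  shows "card S = k"
proof (rule ccontr)
  assume "card S \<noteq> k"
  then have "v S = 0"
    using assms(1) unfolding wedge_H1_def
    by (rule_tac fin_lincombs_vanishing) (auto simp: wedge_def)
  then show False using assms(2) by contradiction
qed

lemma wedge_act_in_tensor_space: "wedge_act n t v \<in> tensor_space n"
proof -
  have "wedge_act n t v T = 0" if "\<not> T \<subseteq> {1..n}" for T
    using that unfolding wedge_act_def wedge_def by simp
  then show ?thesis unfolding tensor_space_def by blast
qed

lemma psi_apply: "psi n f T = (if T \<subseteq> {1..n} then f T else 0)"
proof -
  have "psi n f T = (\<Sum>S\<in>Pow {1..n}. if S = T then f S else 0)"
    unfolding psi_def by (intro sum.cong) (auto simp: tbasis_def)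
  then show ?thesis by simp
qed

lemma psi_id_on_tensor_space: "f \<in> tensor_space n \<Longrightarrow> psi n f = f"
  unfolding tensor_space_def by (rule ext) (auto simp: psi_apply)

lemma Phi_psi: "Phi n t (psi n f) = Phi n t f"
  unfolding Phi_def by (auto simp: psi_apply intro!: sum.cong)

lemma wedge_act_homogeneous:
  assumes "\<And>S. v S \<noteq> 0 \<Longrightarrow> card S = k" "1 \<le> k" "1 \<le> t" "Suc t \<le> n"
  shows "wedge_act n t v = (\<lambda>T. qq ^ (k - 1) * Phi n t v T)"
proof
  fix T
  have "v S * wedge n (map (\<lambda>i. Phi n t (tbasis {i})) (sorted_list_of_set S)) T
      = qq ^ (k - 1) * (v S * Phi_basis t S T)" if "S \<in> Pow {1..n}" for S
  proof (cases "v S = 0")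
    case False
    then have "card S = k" using assms(1) by blast
    moreover from this have "S \<noteq> {}" using assms(2) by auto
    ultimately show ?thesis using that assms(3,4) wedge_sigma_basis[of S n t] by simp
  qed simp
  then have "wedge_act n t v T = (\<Sum>S\<in>Pow {1..n}. qq ^ (k - 1) * (v S * Phi_basis t S T))"
    unfolding wedge_act_def by (rule sum.cong[OF refl])
  also have "\<dots> = qq ^ (k - 1) * Phi n t v T"
    unfolding Phi_def by (rule sum_distrib_left[symmetric])
  finally show "wedge_act n t v T = qq ^ (k - 1) * Phi n t v T" .
qed

theorem proposition1p3:
  fixes n k t :: nat and v :: vec
  assumes "n \<ge> 2" and "1 \<le> k" and "k \<le> n - 1"
    and "1 \<le> t" and "t \<le> n - 1"
    and "v \<in> wedge_H1 n k"
  shows "psi n (wedge_act n t v) = (\<lambda>T. qq ^ (k - 1) * Phi n t (psi n v) T)"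
proof -
  have "psi n (wedge_act n t v) = wedge_act n t v"
    by (rule psi_id_on_tensor_space[OF wedge_act_in_tensor_space])
  also have "\<dots> = (\<lambda>T. qq ^ (k - 1) * Phi n t v T)"
    using assms by (intro wedge_act_homogeneous wedge_H1_support) auto
  finally show ?thesis by (simp only: Phi_psi)
qed

end
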